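(* For every pair $(R,S)\in\{(R_1,R_4),(R_1,R_5),(R_2,R_4),(R_2,R_5),(R_3,R_5),(R_5,R_2),(R_5,R_3)\}$ we have $\mathsf{AP}(R,S)=\mathsf{C}$.
   Context: Tuples in $\{0,1\}^4$ are written as strings $abcd$. The relations $R_1,\dots,R_5\subseteq\{0,1\}^4$ are $R_1=\{0000,1000,0100,1100,1010,0110,1001,0101,0011,1011,0111,1111\}$, $R_2=\{0000,1000,0100,1100,1010,0101,0011,1111\}$, $R_3=\{0000,1100,1010,0101,0011,1011,0111,1111\}$, $R_4=\{0000,1100,1010,0101,0011,1111\}$, $R_5=\{0000,1100,1010,0110,1001,0101,0011,1111\}$. For $R,S\subseteq\{0,1\}^4$, a Boolean function $f\colon\{0,1\}^n\to\{0,1\}$ is analogy-preserving relative to $(R,S)$ if for all $\mathbf{a},\mathbf{b},\mathbf{c},\mathbf{d}\in\{0,1\}^n$ with $(a_i,b_i,c_i,d_i)\in R$ for every $i$ and such that $(f(\mathbf{a}),f(\mathbf{b}),f(\mathbf{c}),x)\in S$ for some $x\in\{0,1\}$, we have $(f(\mathbf{a}),f(\mathbf{b}),f(\mathbf{c}),f(\mathbf{d}))\in S$; $\mathsf{AP}(R,S)$ is the set of all such functions of all arities. $\mathsf{C}$ is the set of all constant Boolean functions (of all arities). *)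

theory Defs
  imports Main
begin

type_synonym tup4 = "bool \<times> bool \<times> bool \<times> bool"

text \<open>Bit 0 is False, 1 is True; tuple abcd is (a,b,c,d).\<close>
definition R1 :: "tup4 set" where
  "R1 = {(False,False,False,False),(True,False,False,False),(False,True,False,False),
         (True,True,False,False),(True,False,True,False),(False,True,True,False),
         (True,False,False,True),(False,True,False,True),(False,False,True,True),
         (True,False,True,True),(False,True,True,True),(True,True,True,True)}"

definition R2 :: "tup4 set" where
  "R2 = {(False,False,False,False),(True,False,False,False),(False,True,False,False),
         (True,True,False,False),(True,False,True,False),(False,True,False,True),
         (False,False,True,True),(True,True,True,True)}"

definition R3 :: "tup4 set" where
  "R3 = {(False,False,False,False),(True,True,False,False),(True,False,True,False),
         (False,True,False,True),(False,False,True,True),(True,False,True,True),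
         (False,True,True,True),(True,True,True,True)}"

definition R4 :: "tup4 set" where
  "R4 = {(False,False,False,False),(True,True,False,False),(True,False,True,False),
         (False,True,False,True),(False,False,True,True),(True,True,True,True)}"

definition R5 :: "tup4 set" where
  "R5 = {(False,False,False,False),(True,True,False,False),(True,False,True,False),
         (False,True,True,False),(True,False,False,True),(False,True,False,True),
         (False,False,True,True),(True,True,True,True)}"

text \<open>An n-ary Boolean function is represented by f :: bool list => bool, of which
  only the values on lists of length n matter.\<close>
definition AP :: "tup4 set \<Rightarrow> tup4 set \<Rightarrow> nat \<Rightarrow> (bool list \<Rightarrow> bool) \<Rightarrow> bool" where
  "AP R S n f \<longleftrightarrow>
     (\<forall>a b c d. length a = n \<and> length b = n \<and> length c = n \<and> length d = n \<and>
        (\<forall>i<n. (a ! i, b ! i, c ! i, d ! i) \<in> R) \<and>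
        (\<exists>x. (f a, f b, f c, x) \<in> S)
        \<longrightarrow> (f a, f b, f c, f d) \<in> S)"

definition is_const :: "nat \<Rightarrow> (bool list \<Rightarrow> bool) \<Rightarrow> bool" where
  "is_const n f \<longleftrightarrow> (\<exists>v. \<forall>x. length x = n \<longrightarrow> f x = v)"

end

theory Submission
  imports Defs
begin

text \<open>Every pair is handled by one or two instances of the analogy-preservation condition
  in which each coordinate of \<open>a, b, c, d\<close> is either a constant or a copy of the
  corresponding coordinate of an arbitrary argument \<open>x\<close>; the resulting constraint on
  \<open>f\<close> at \<open>x\<close>, at the all-zero and at the all-one argument forces \<open>f x = f 0\<dots>0\<close>.
  Conversely a constant function preserves analogies because every \<open>S\<close> involved
  contains \<open>vvvv\<close> whenever it contains some \<open>vvve\<close>.\<close>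

lemma AP_map_instance:
  assumes "AP R S n f" and "length x = n"
    and "\<And>p. (ga p, gb p, gc p, gd p) \<in> R"
    and "\<exists>e. (f (map ga x), f (map gb x), f (map gc x), e) \<in> S"
  shows "(f (map ga x), f (map gb x), f (map gc x), f (map gd x)) \<in> S"
  using assms unfolding AP_def by auto

definition diag_closed :: "tup4 set \<Rightarrow> bool" where
  "diag_closed S \<longleftrightarrow> (\<forall>v e. (v, v, v, e) \<in> S \<longrightarrow> (v, v, v, v) \<in> S)"

lemma diag_closed_R2: "diag_closed R2"
  and diag_closed_R3: "diag_closed R3"
  and diag_closed_R4: "diag_closed R4"
  and diag_closed_R5: "diag_closed R5"
  unfolding diag_closed_def R2_def R3_def R4_def R5_def by auto

lemma AP_if_is_const:
  assumes "diag_closed S" and "is_const n f"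
  shows "AP R S n f"
proof -
  obtain v where v: "\<And>x. length x = n \<Longrightarrow> f x = v"
    using assms(2) unfolding is_const_def by blast
  show ?thesis
    unfolding AP_def
  proof (intro allI impI)
    fix a b c d
    assume H: "length a = n \<and> length b = n \<and> length c = n \<and> length d = n \<and>
        (\<forall>i<n. (a ! i, b ! i, c ! i, d ! i) \<in> R) \<and> (\<exists>x. (f a, f b, f c, x) \<in> S)"
    then have "f a = v" "f b = v" "f c = v" "f d = v"
      using v by auto
    with H assms(1) show "(f a, f b, f c, f d) \<in> S"
      unfolding diag_closed_def by auto
  qed
qed

lemma AP_iff_is_const:
  assumes "diag_closed S"
    and "\<And>x. AP R S n f \<Longrightarrow> length x = n \<Longrightarrow> f x = f (replicate n False)"
  shows "AP R S n f \<longleftrightarrow> is_const n f"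
  using AP_if_is_const[OF assms(1)] assms(2) unfolding is_const_def by blast

text \<open>In \<open>R4\<close> and \<open>R5\<close> a triple \<open>uvu\<close> always extends (by \<open>v\<close>), but \<open>uvuu\<close> only lies in the
  relation when \<open>u = v\<close>.\<close>

lemma AP_R4_R5_eq_at_zeros:
  assumes "AP R S n f" and "length x = n" and "S = R4 \<or> S = R5"
    and "\<And>p. (False, p, False, False) \<in> R"
  shows "f x = f (replicate n False)"
proof -
  have "(\<exists>e. (f (replicate n False), f x, f (replicate n False), e) \<in> S) \<Longrightarrow>
      (f (replicate n False), f x, f (replicate n False), f (replicate n False)) \<in> S"
    using AP_map_instance[OF assms(1,2), of "\<lambda>_. False" id "\<lambda>_. False" "\<lambda>_. False"] assms(2,4)
    by (simp add: map_replicate_const)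
  with assms(3) show ?thesis
    unfolding R4_def R5_def by (cases "f (replicate n False)"; cases "f x") auto
qed

text \<open>If \<open>f x \<noteq> f 0\<dots>0\<close>, then one of the triples \<open>uvv\<close>, \<open>vuu\<close> is \<open>100\<close>, which extends in
  \<open>R2\<close> (by \<open>0\<close>) but not to \<open>1001\<close>; in \<open>R3\<close> the same happens with \<open>011\<close> and \<open>0110\<close>.\<close>

lemma AP_R2_R3_eq_at_zeros:
  assumes "AP R S n f" and "length x = n" and "S = R2 \<or> S = R3"
    and "\<And>p. (False, p, p, False) \<in> R" and "\<And>p. (p, False, False, p) \<in> R"
  shows "f x = f (replicate n False)"
proof -
  have "(\<exists>e. (f (replicate n False), f x, f x, e) \<in> S) \<Longrightarrow>
      (f (replicate n False), f x, f x, f (replicate n False)) \<in> S"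
    using AP_map_instance[OF assms(1,2), of "\<lambda>_. False" id id "\<lambda>_. False"] assms(2,4)
    by (simp add: map_replicate_const)
  moreover have "(\<exists>e. (f x, f (replicate n False), f (replicate n False), e) \<in> S) \<Longrightarrow>
      (f x, f (replicate n False), f (replicate n False), f x) \<in> S"
    using AP_map_instance[OF assms(1,2), of id "\<lambda>_. False" "\<lambda>_. False" id] assms(2,5)
    by (simp add: map_replicate_const)
  ultimately show ?thesis
    using assms(3) unfolding R2_def R3_def
    by (cases "f (replicate n False)"; cases "f x") auto
qed

text \<open>\<open>R5\<close> is the set of even-parity tuples: every triple extends, and uniquely.\<close>

lemma mem_R5_iff: "(a, b, c, d) \<in> R5 \<longleftrightarrow> ((a \<longleftrightarrow> b) \<longleftrightarrow> (c \<longleftrightarrow> d))"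
  unfolding R5_def by (cases a; cases b; cases c; cases d) auto

lemma R5_extends: "\<exists>d. (a, b, c, d) \<in> R5"
  by (rule exI[of _ "(a \<longleftrightarrow> b) \<longleftrightarrow> c"]) (auto simp: mem_R5_iff)

lemma AP_R1_R5_eq_at_zeros:
  assumes "AP R1 R5 n f" and "length x = n"
  shows "f x = f (replicate n False)"
proof -
  have "(False, True, True, p) \<in> R1" for p
    unfolding R1_def by (cases p) simp_all
  then have "(f (replicate n False), f (replicate n True), f (replicate n True), f x) \<in> R5"
    using AP_map_instance[OF assms(1,2), of "\<lambda>_. False" "\<lambda>_. True" "\<lambda>_. True" id] assms(2) R5_extends
    by (simp add: map_replicate_const)
  then show ?thesis
    by (auto simp: mem_R5_iff)
qed

lemma AP_R3_R5_eq_at_zeros: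
  assumes "AP R3 R5 n f" and "length x = n"
  shows "f x = f (replicate n False)"
proof -
  have "(False, True, p, True) \<in> R3" for p
    unfolding R3_def by (cases p) simp_all
  then have "(f (replicate n False), f (replicate n True), f x, f (replicate n True)) \<in> R5"
    using AP_map_instance[OF assms(1,2), of "\<lambda>_. False" "\<lambda>_. True" id "\<lambda>_. True"] assms(2) R5_extends
    by (simp add: map_replicate_const)
  then show ?thesis
    by (auto simp: mem_R5_iff)
qed

lemma R1_0p00: "(False, p, False, False) \<in> R1"
  and R2_0p00: "(False, p, False, False) \<in> R2"
  and R5_0pp0: "(False, p, p, False) \<in> R5"
  and R5_p00p: "(p, False, False, p) \<in> R5"
  unfolding R1_def R2_def R5_def by (cases p; simp)+

theorem mainTheorem16:
  shows "\<forall>(R, S) \<in> {(R1,R4),(R1,R5),(R2,R4),(R2,R5),(R3,R5),(R5,R2),(R5,R3)}.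
           \<forall>n f. AP R S n f \<longleftrightarrow> is_const n f"
proof (intro ballI allI, clarify)
  fix R S n and f :: "bool list \<Rightarrow> bool"
  assume RS: "(R, S) \<in> {(R1,R4),(R1,R5),(R2,R4),(R2,R5),(R3,R5),(R5,R2),(R5,R3)}"
  have "diag_closed S"
    using RS diag_closed_R2 diag_closed_R3 diag_closed_R4 diag_closed_R5 by auto
  moreover have "f x = f (replicate n False)" if "AP R S n f" and "length x = n" for x
    using RS that(1)
    by (elim insertE emptyE; clarsimp)
      (metis AP_R4_R5_eq_at_zeros[OF _ that(2) _ R1_0p00] AP_R4_R5_eq_at_zeros[OF _ that(2) _ R2_0p00]
        AP_R2_R3_eq_at_zeros[OF _ that(2) _ R5_0pp0 R5_p00p]
        AP_R1_R5_eq_at_zeros[OF _ that(2)] AP_R3_R5_eq_at_zeros[OF _ that(2)])+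
  ultimately show "AP R S n f \<longleftrightarrow> is_const n f"
    by (rule AP_iff_is_const)
qed

end
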